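(* Let $p$ be a prime, let $\{a^1,\ldots,a^n\}\subseteq \mathbb{Z}^m$ be a $p$-adic generating set for a cone, and let $F$ be a nonempty face of $\operatorname{cone}\{a^1,\ldots,a^n\}$. Then $\{a^i:a^i\in F\}$ is a $p$-adic generating set for the cone $F$.
   Context: A $p$-adic rational is a number $a/p^k$ with $a,k\in\mathbb{Z}$, $k\ge0$. A finite set $S\subseteq\mathbb{Z}^m$ is a $p$-adic generating set for a cone if every integral vector in the conic hull of $S$ is a conic combination of the elements of $S$ with $p$-adic coefficients. *)

theory Defs
  imports "HOL-Analysis.Analysis"
begin

definition padic_rational :: "nat \<Rightarrow> real \<Rightarrow> bool" where
  "padic_rational p r \<longleftrightarrow> (\<exists>(a::int) (k::nat). r = of_int a / (real p) ^ k)"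

definition integral_vec :: "real^'m \<Rightarrow> bool" where
  "integral_vec x \<longleftrightarrow> (\<forall>i. x $ i \<in> \<int>)"

definition conic_hull :: "(real^'m) set \<Rightarrow> (real^'m) set" where
  "conic_hull S = {x. \<exists>c. (\<forall>s\<in>S. c s \<ge> 0) \<and> x = (\<Sum>s\<in>S. c s *\<^sub>R s)}"

definition padic_generating_set :: "nat \<Rightarrow> (real^'m) set \<Rightarrow> bool" where
  "padic_generating_set p S \<longleftrightarrow> finite S \<and> (\<forall>s\<in>S. integral_vec s) \<and>
     (\<forall>x\<in>conic_hull S. integral_vec x \<longrightarrow>
        (\<exists>c. (\<forall>s\<in>S. c s \<ge> 0 \<and> padic_rational p (c s)) \<and> x = (\<Sum>s\<in>S. c s *\<^sub>R s)))"

end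

(*
  A nonempty face F of a convex cone C is again a convex cone, and it is closed under taking
  summands: if x, y \<in> C and x + y \<in> F, then the midpoint of x and y lies in F, hence so do x
  and y.  Consequently, whenever a point of F is written as a nonnegative combination of the
  generators, every generator with a positive coefficient lies in F.  Thus the generators in F
  generate F, and the p-adic representation of an integral point of F over all generators
  already uses only those in F.
*)
theory Submission
  imports Defs
begin

lemma face_of_convex_cone_contains_0:
  assumes "T face_of C" "convex_cone C" "T \<noteq> {}"
  shows "0 \<in> T"
proof -
  obtain x where x: "x \<in> T" using assms(3) by blast
  have "x \<in> C" using x assms(1) face_of_imp_subset by blast
  then have "0 \<in> C" "2 *\<^sub>R x \<in> C" using assms(2) by (auto simp: convex_cone_iff)
  moreover have "x = 0 \<or> x \<in> open_segment 0 (2 *\<^sub>R x)"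
    unfolding in_segment by (auto intro!: exI[of _ "1/2"])
  ultimately show ?thesis using face_ofD[OF assms(1)] x by fastforce
qed

lemma face_of_convex_cone:
  assumes T: "T face_of C" and C: "convex_cone C" and "T \<noteq> {}"
  shows "convex_cone T"
proof -
  have "0 \<in> T" using face_of_convex_cone_contains_0 assms by blast
  have "c *\<^sub>R x \<in> T" if x: "x \<in> T" and c: "c \<ge> 0" for x c
  proof (cases "c \<le> 1")
    case True
    have "(1 - c) *\<^sub>R 0 + c *\<^sub>R x \<in> T"
      using convexD[OF face_of_imp_convex[OF T] \<open>0 \<in> T\<close> x, of "1 - c" c] c True by simp
    then show ?thesis by simp
  next
    case False
    have "x \<in> C" using x T face_of_imp_subset by blast
    then have "0 \<in> C" "c *\<^sub>R x \<in> C" using C c by (auto simp: convex_cone_iff)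
    moreover have "x = 0 \<or> x \<in> open_segment 0 (c *\<^sub>R x)"
      unfolding in_segment using False by (auto intro!: exI[of _ "1/c"])
    ultimately show ?thesis using face_ofD[OF T] x \<open>0 \<in> T\<close> by fastforce
  qed
  then show ?thesis
    using \<open>0 \<in> T\<close> face_of_imp_convex[OF T] by (auto simp: convex_cone_def conic_def)
qed

lemma face_of_convex_cone_add_left:
  assumes T: "T face_of C" and C: "convex_cone C" and "T \<noteq> {}"
    and x: "x \<in> C" and y: "y \<in> C" and xy: "x + y \<in> T"
  shows "x \<in> T"
proof -
  have "midpoint x y \<in> T"
    using convex_cone_scaleR[OF face_of_convex_cone[OF assms(1-3)] _ xy, of "1/2"]
    by (simp add: midpoint_def)
  show ?thesis
  proof (cases "x = y")
    case True
    with \<open>midpoint x y \<in> T\<close> show ?thesis by simp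
  next
    case False
    then show ?thesis
      using face_ofD[OF T _ x y \<open>midpoint x y \<in> T\<close>] by simp
  qed
qed

lemma conic_hullE:
  assumes "x \<in> conic_hull S"
  obtains c where "\<forall>s\<in>S. c s \<ge> 0" "x = (\<Sum>s\<in>S. c s *\<^sub>R s)"
  using assms unfolding conic_hull_def by auto

lemma convex_cone_conic_hull: "convex_cone (conic_hull S)"
proof -
  have "0 \<in> conic_hull S"
    unfolding conic_hull_def by (auto intro!: exI[of _ "\<lambda>_. 0"])
  moreover have "x + y \<in> conic_hull S" if x: "x \<in> conic_hull S" and y: "y \<in> conic_hull S" for x y
  proof -
    obtain a where a: "\<forall>s\<in>S. a s \<ge> 0" "x = (\<Sum>s\<in>S. a s *\<^sub>R s)"
      using x by (rule conic_hullE)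
    obtain b where b: "\<forall>s\<in>S. b s \<ge> 0" "y = (\<Sum>s\<in>S. b s *\<^sub>R s)"
      using y by (rule conic_hullE)
    have "x + y = (\<Sum>s\<in>S. (a s + b s) *\<^sub>R s)"
      unfolding a(2) b(2) by (simp add: scaleR_add_left sum.distrib)
    then show ?thesis
      unfolding conic_hull_def using a(1) b(1) by (intro CollectI exI[of _ "\<lambda>s. a s + b s"]) auto
  qed
  moreover have "c *\<^sub>R x \<in> conic_hull S" if x: "x \<in> conic_hull S" and c: "c \<ge> 0" for x c
  proof -
    obtain a where a: "\<forall>s\<in>S. a s \<ge> 0" "x = (\<Sum>s\<in>S. a s *\<^sub>R s)"
      using x by (rule conic_hullE)
    have "c *\<^sub>R x = (\<Sum>s\<in>S. (c * a s) *\<^sub>R s)"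
      unfolding a(2) by (simp add: scaleR_sum_right)
    then show ?thesis
      unfolding conic_hull_def using a(1) c by (intro CollectI exI[of _ "\<lambda>s. c * a s"]) auto
  qed
  ultimately show ?thesis unfolding convex_cone_iff by blast
qed

lemma nonneg_combination_in_conic_hull:
  assumes "finite S" "A \<subseteq> S" "\<forall>s\<in>A. c s \<ge> 0"
  shows "(\<Sum>s\<in>A. c s *\<^sub>R s) \<in> conic_hull S"
proof -
  have "(\<Sum>s\<in>A. c s *\<^sub>R s) = (\<Sum>s\<in>S. (if s \<in> A then c s else 0) *\<^sub>R s)"
    using assms(1,2) by (simp add: if_distrib[of "\<lambda>r. r *\<^sub>R _"] sum.If_cases Int_absorb1)
  then show ?thesis
    using assms(3) unfolding conic_hull_def
    by (auto intro!: exI[of _ "\<lambda>s. if s \<in> A then c s else 0"])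
qed

lemma conic_hull_subset_convex_cone:
  assumes "convex_cone T" "A \<subseteq> T"
  shows "conic_hull A \<subseteq> T"
proof
  fix x assume "x \<in> conic_hull A"
  then obtain c where c: "\<forall>s\<in>A. c s \<ge> 0" and x: "x = (\<Sum>s\<in>A. c s *\<^sub>R s)"
    by (rule conic_hullE)
  have "(\<Sum>s\<in>B. c s *\<^sub>R s) \<in> T" if "B \<subseteq> A" for B
    using that
  proof (induction B rule: infinite_finite_induct)
    case (insert s B)
    then show ?case
      using assms c by (auto intro!: convex_cone_add convex_cone_scaleR)
  qed (use convex_cone_contains_0[OF assms(1)] in auto)
  then show "x \<in> T" using x by blast
qed

lemma face_of_conic_hull_coeff_eq_0:
  assumes S: "finite S" and T: "T face_of conic_hull S" and c: "\<forall>s\<in>S. c s \<ge> 0"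
    and x: "(\<Sum>s\<in>S. c s *\<^sub>R s) \<in> T" and s: "s \<in> S" "s \<notin> T"
  shows "c s = 0"
proof (rule ccontr)
  assume "c s \<noteq> 0"
  then have pos: "c s > 0" using c s by force
  have "c s *\<^sub>R s \<in> conic_hull S"
    using nonneg_combination_in_conic_hull[of S "{s}" c] S s c by simp
  moreover have "(\<Sum>t\<in>S - {s}. c t *\<^sub>R t) \<in> conic_hull S"
    using nonneg_combination_in_conic_hull[of S "S - {s}" c] S c by blast
  moreover have "c s *\<^sub>R s + (\<Sum>t\<in>S - {s}. c t *\<^sub>R t) \<in> T"
    using x sum.remove[OF S s(1), of "\<lambda>t. c t *\<^sub>R t"] by simp
  ultimately have "c s *\<^sub>R s \<in> T"
    using face_of_convex_cone_add_left[OF T convex_cone_conic_hull] by blast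
  moreover have "convex_cone T"
    using face_of_convex_cone[OF T convex_cone_conic_hull] x by blast
  ultimately have "(1 / c s) *\<^sub>R (c s *\<^sub>R s) \<in> T"
    using pos by (simp add: convex_cone_scaleR del: scaleR_scaleR)
  then show False using pos s by simp
qed

lemma sum_restrict_face_of_conic_hull:
  assumes "finite S" "T face_of conic_hull S" "\<forall>s\<in>S. c s \<ge> 0"
    and "(\<Sum>s\<in>S. c s *\<^sub>R s) \<in> T"
  shows "(\<Sum>s\<in>S. c s *\<^sub>R s) = (\<Sum>s\<in>{a \<in> S. a \<in> T}. c s *\<^sub>R s)"
  using face_of_conic_hull_coeff_eq_0[OF assms]
  by (intro sum.mono_neutral_right[OF assms(1)]) auto

lemma conic_hull_face_of_conic_hull:
  assumes S: "finite S" and T: "T face_of conic_hull S" and "T \<noteq> {}"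
  shows "conic_hull {a \<in> S. a \<in> T} = T"
proof
  show "conic_hull {a \<in> S. a \<in> T} \<subseteq> T"
    using face_of_convex_cone[OF T convex_cone_conic_hull assms(3)]
    by (rule conic_hull_subset_convex_cone) auto
  show "T \<subseteq> conic_hull {a \<in> S. a \<in> T}"
  proof
    fix x assume "x \<in> T"
    then have "x \<in> conic_hull S" using face_of_imp_subset[OF T] by blast
    then obtain c where c: "\<forall>s\<in>S. c s \<ge> 0" and x: "x = (\<Sum>s\<in>S. c s *\<^sub>R s)"
      by (rule conic_hullE)
    then have "x = (\<Sum>s\<in>{a \<in> S. a \<in> T}. c s *\<^sub>R s)"
      using sum_restrict_face_of_conic_hull[OF S T c] \<open>x \<in> T\<close> by simp
    then show "x \<in> conic_hull {a \<in> S. a \<in> T}"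
      using nonneg_combination_in_conic_hull[of "{a \<in> S. a \<in> T}" "{a \<in> S. a \<in> T}" c] S c
      by simp
  qed
qed

lemma padic_generating_set_face:
  assumes gen: "padic_generating_set p S" and T: "T face_of conic_hull S" and "T \<noteq> {}"
  shows "padic_generating_set p {a \<in> S. a \<in> T}"
  unfolding padic_generating_set_def
proof (intro conjI ballI impI)
  have S: "finite S" using gen by (simp add: padic_generating_set_def)
  then show "finite {a \<in> S. a \<in> T}" by simp
  show "integral_vec s" if "s \<in> {a \<in> S. a \<in> T}" for s
    using gen that by (simp add: padic_generating_set_def)
  fix x assume x: "x \<in> conic_hull {a \<in> S. a \<in> T}" and "integral_vec x"
  then have "x \<in> T" using conic_hull_face_of_conic_hull[OF S T assms(3)] by simp
  then have "x \<in> conic_hull S" using face_of_imp_subset[OF T] by blast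
  then obtain c where c: "\<forall>s\<in>S. c s \<ge> 0 \<and> padic_rational p (c s)" "x = (\<Sum>s\<in>S. c s *\<^sub>R s)"
    using gen \<open>integral_vec x\<close> unfolding padic_generating_set_def by blast
  then have "x = (\<Sum>s\<in>{a \<in> S. a \<in> T}. c s *\<^sub>R s)"
    using sum_restrict_face_of_conic_hull[OF S T, of c] \<open>x \<in> T\<close> by auto
  with c(1) show "\<exists>c. (\<forall>s\<in>{a \<in> S. a \<in> T}. 0 \<le> c s \<and> padic_rational p (c s)) \<and>
      x = (\<Sum>s\<in>{a \<in> S. a \<in> T}. c s *\<^sub>R s)"
    by auto
qed

theorem proposition3p5:
  fixes p :: nat and S F :: "(real^'m) set"
  assumes "prime p"
    and "padic_generating_set p S"
    and "F face_of conic_hull S"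
    and "F \<noteq> {}"
  shows "conic_hull {a \<in> S. a \<in> F} = F \<and> padic_generating_set p {a \<in> S. a \<in> F}"
proof -
  have "finite S" using assms(2) by (simp add: padic_generating_set_def)
  then show ?thesis
    using conic_hull_face_of_conic_hull assms(3,4) padic_generating_set_face[OF assms(2-4)] by blast
qed

end
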